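(* Fix $\alpha,\beta\in(0,1)$ and a non-decreasing function $\omega:\mathbb{N}\to\mathbb{N}$ with $\omega(m)\le O(m^{0.5-c})$ for some constant $c>0$. There exist constants $C_{\alpha,\beta}>0$ and $C'_\beta>0$ such that the following holds for the decoupled process with parameters $(\mathcal{P}_\infty,v_0,\mathcal{P}_\infty,\alpha,\beta)$. Let $0\le s<s'\le t-C_{\alpha,\beta}$ and let $k,k'$ be the indices of the rumor frontier at times $s,s'$ respectively. If $s'-s>C'_\beta\,\omega(t-s)\sqrt{t-s}$, then with probability at least $1-4e^{-\omega(t-s)^2}$ all of the following hold: $$|\sigma_k(t)-(s+\beta(t-s))|\le 4\omega(t-s)\sqrt{\beta(t-s)},\qquad |\sigma_{k'}(t)-(s'+\beta(t-s'))|\le 4\omega(t-s)\sqrt{\beta(t-s)},$$ and $\sigma_{k'}(t)-\sigma_k(t)>\omega(t-s)\sqrt{t-s}>0$.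
   Context: Decoupled process on the infinite path $\mathcal{P}_\infty$ with vertices $v_0\to v_1\to\cdots$, root $v_0$, $p(v_i)=v_{i-1}$. Fix $\alpha,\beta\in[0,1]$. Let $Z_0=+1$, $Z_1,Z_2,\dots$ i.i.d. uniform on $\{-1,+1\}$, $Z_\infty=\bot$; counter $\mathrm{count}_0=1$; $\mathrm{origin}_0(v_0)=0$ (and always $0$), $\mathrm{origin}_0(v_i)=\infty$ for $i\ge1$; $g_t(v)=Z_{\mathrm{origin}_t(v)}$. Update from $t$ to $t+1$ (independent choices): if $g_t(v)=g_t(p(v))=\bot$ then $\mathrm{origin}_{t+1}(v)=\infty$; if $g_t(v)=\bot\ne g_t(p(v))$: w.p. $1-\alpha$, $\mathrm{origin}_{t+1}(v)=\mathrm{origin}_t(p(v))$, and w.p. $\alpha$, $\mathrm{origin}_{t+1}(v)$ is the current counter value and the counter is incremented; if $g_t(v)\ne\bot$, $v\neq v_0$: w.p. $\beta$, $\mathrm{origin}_{t+1}(v)=\mathrm{origin}_t(p(v))$, otherwise unchanged. $k$-frontier: $\sigma_k(t)=\max\{i\in\mathbb{N}:\mathrm{origin}_t(v_i)\le k\}$. At time $t$ exactly $v_0,\dots,v_t$ have non-$\bot$ values; the index of the rumor frontier at time $t$ is $\mathrm{origin}_t(v_t)$. *)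

theory Defs
  imports "HOL-Probability.Probability" "HOL-Library.Landau_Symbols" "HOL-Library.Extended_Nat"
begin

text \<open>Decoupled process on the infinite path v_0 -> v_1 -> ..., vertex v_i identified with i,
  parent of i is i - 1.  Origins take values in enat; the value \<infinity> encodes the index
  \<infinity> (with Z_\<infinity> = bottom).  Since Z_i \<noteq> bottom for finite i, g_t(v) = bottom
  iff origin_t(v) = \<infinity>, so the values Z_i do not influence origins or frontiers.

  Randomness: independent coins X(t,v,True) ~ Bernoulli(alpha) (used when v is bottom at time t:
  True = take a fresh counter value) and X(t,v,False) ~ Bernoulli(beta) (used when v is non-bottom:
  True = copy the parent's origin).  Exactly one coin is consulted per (t,v), so the
  choices are independent as required.\<close>

type_synonym dstate = "(nat \<Rightarrow> enat) \<times> nat"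

definition dinit :: dstate where
  "dinit = ((\<lambda>i. if i = 0 then 0 else \<infinity>), 1)"

definition dstep :: "(nat \<times> nat \<times> bool \<Rightarrow> bool) \<Rightarrow> nat \<Rightarrow> dstate \<Rightarrow> dstate" where
  "dstep X t st = (let og = fst st; c = snd st in
     ((\<lambda>v. if v = 0 then 0
           else if og v = \<infinity> then
             (if og (v - 1) = \<infinity> then \<infinity>
              else if X (t, v, True) then enat c else og (v - 1))
           else if X (t, v, False) then og (v - 1) else og v),
      c + card {v. v \<noteq> 0 \<and> og v = \<infinity> \<and> og (v - 1) \<noteq> \<infinity> \<and> X (t, v, True)}))"

fun dproc :: "(nat \<times> nat \<times> bool \<Rightarrow> bool) \<Rightarrow> nat \<Rightarrow> dstate" where
  "dproc X 0 = dinit"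
| "dproc X (Suc t) = dstep X t (dproc X t)"

definition origin :: "(nat \<times> nat \<times> bool \<Rightarrow> bool) \<Rightarrow> nat \<Rightarrow> nat \<Rightarrow> enat" where
  "origin X t v = fst (dproc X t) v"

definition frontier :: "(nat \<times> nat \<times> bool \<Rightarrow> bool) \<Rightarrow> enat \<Rightarrow> nat \<Rightarrow> nat" where
  "frontier X k t = Max {i. origin X t i \<le> k}"

definition rumor_index :: "(nat \<times> nat \<times> bool \<Rightarrow> bool) \<Rightarrow> nat \<Rightarrow> enat" where
  "rumor_index X t = origin X t t"

definition coin_space :: "real \<Rightarrow> real \<Rightarrow> (nat \<times> nat \<times> bool \<Rightarrow> bool) measure" where
  "coin_space \<alpha> \<beta> = (\<Pi>\<^sub>M i\<in>UNIV. measure_pmf (bernoulli_pmf (if snd (snd i) then \<alpha> else \<beta>)))"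

end

theory Submission
  imports Defs
begin

text \<open>Let k be the rumor index at time s. At every later time the vertices of origin at
  most k form an initial segment of the path, and its right end, the frontier, performs a
  lazy walk: at the rumor front it stays when the new vertex draws a fresh index
  (probability \<alpha>) and advances otherwise, behind the front it advances when the next vertex
  copies its parent (probability \<beta>). Giving the front state weight 2, the exponential moment
  of the displacement is dominated by that of a sum of \<beta>-coins for all tilts up to a bound
  depending on \<alpha>, so Chernoff's bound keeps the frontier within 4 \<omega> (\<beta> (t - s))^(1/2) of
  s + \<beta> (t - s) up to probability 6 exp (-4 \<omega>^2). The same holds for the frontier started at
  s', and since the two means differ by (1 - \<beta>) (s' - s), more than 10 \<omega> (t - s)^(1/2),
  a union bound over both deviations gives the separation.\<close>

section \<open>The frontier as a lazy walk\<close>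

abbreviation counter :: "(nat \<times> nat \<times> bool \<Rightarrow> bool) \<Rightarrow> nat \<Rightarrow> nat" where
  "counter X t \<equiv> snd (dproc X t)"

lemma origin_0: "origin X 0 v = (if v = 0 then 0 else \<infinity>)"
  by (simp add: origin_def dinit_def)

lemma origin_Suc:
  "origin X (Suc t) v =
    (if v = 0 then 0
     else if origin X t v = \<infinity> then
       (if origin X t (v - 1) = \<infinity> then \<infinity>
        else if X (t, v, True) then enat (counter X t) else origin X t (v - 1))
     else if X (t, v, False) then origin X t (v - 1) else origin X t v)"
  by (simp add: origin_def dstep_def Let_def)

lemma origin_eq_infinity_iff: "origin X t v = \<infinity> \<longleftrightarrow> t < v"
proof (induction t arbitrary: v)
  case 0
  then show ?case by (simp add: origin_0)
next
  case (Suc t)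
  then show ?case using Suc.IH[of "v - 1"] by (cases v) (auto simp: origin_Suc)
qed

lemma counter_Suc: "counter X (Suc t) = counter X t + (if X (t, Suc t, True) then 1 else 0)"
proof -
  have new_vertex: "v \<noteq> 0 \<and> origin X t v = \<infinity> \<and> origin X t (v - 1) \<noteq> \<infinity> \<longleftrightarrow> v = Suc t" for v
    unfolding origin_eq_infinity_iff by arith
  have "counter X (Suc t) = counter X t +
      card {v. v \<noteq> 0 \<and> origin X t v = \<infinity> \<and> origin X t (v - 1) \<noteq> \<infinity> \<and> X (t, v, True)}"
    by (simp add: dstep_def Let_def origin_def)
  also have "{v. v \<noteq> 0 \<and> origin X t v = \<infinity> \<and> origin X t (v - 1) \<noteq> \<infinity> \<and> X (t, v, True)}
      = {v. v = Suc t \<and> X (t, v, True)}"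
    using new_vertex by (intro Collect_cong) (metis (no_types))
  also have "\<dots> = (if X (t, Suc t, True) then {Suc t} else {})"
    by auto
  finally show ?thesis by simp
qed

(* From here on counter X (Suc t) is rewritten by counter_Suc instead of unfolding dproc. *)
declare dproc.simps(2) [simp del]

lemma counter_mono: "t \<le> t' \<Longrightarrow> counter X t \<le> counter X t'"
  by (rule lift_Suc_mono_le[of "counter X"]) (metis counter_Suc le_add1)

lemma origin_root: "origin X t 0 = 0"
  by (cases t) (simp_all add: origin_Suc origin_0)

lemma origin_less_counter: "origin X t v \<noteq> \<infinity> \<Longrightarrow> origin X t v < enat (counter X t)"
proof (induction t arbitrary: v)
  case 0
  then show ?case by (simp add: origin_0 dinit_def zero_enat_def split: if_splits)
next
  case (Suc t)
  have old: "origin X t w < enat (counter X (Suc t))" if "origin X t w \<noteq> \<infinity>" for w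
    using order_less_le_trans[OF Suc.IH[OF that]] counter_mono[of t "Suc t" X] by simp
  show ?case
  proof (cases "v = Suc t \<and> X (t, Suc t, True)")
    case True
    then show ?thesis by (simp add: origin_Suc counter_Suc origin_eq_infinity_iff)
  next
    case False
    have "origin X (Suc t) v \<in> {origin X t 0, origin X t v, origin X t (v - 1)}"
    proof (cases "v = Suc t")
      case True
      then show ?thesis using False by (simp add: origin_Suc origin_eq_infinity_iff)
    next
      case False
      then have "origin X t v = \<infinity> \<Longrightarrow> origin X t (v - 1) = \<infinity>"
        by (simp add: origin_eq_infinity_iff)
      then show ?thesis by (simp add: origin_Suc origin_root)
    qed
    then show ?thesis using Suc.prems old by (metis empty_iff insert_iff)
  qed
qed

lemma origin_Suc_le:
  assumes "mono (origin X t)" "v \<le> t"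
  shows "origin X (Suc t) v \<le> origin X t v"
  using assms monoD[OF assms(1), of "v - 1" v]
  by (auto simp: origin_Suc origin_eq_infinity_iff)

lemma origin_le_Suc_Suc:
  assumes "mono (origin X t)" "v \<le> t"
  shows "origin X t v \<le> origin X (Suc t) (Suc v)"
proof (cases "v = t")
  case True
  then show ?thesis
    using origin_less_counter[of X t t] by (auto simp: origin_Suc origin_eq_infinity_iff less_imp_le)
next
  case False
  then show ?thesis
    using assms monoD[OF assms(1), of v "Suc v"] by (auto simp: origin_Suc origin_eq_infinity_iff)
qed

lemma origin_mono: "mono (origin X t)"
proof (induction t)
  case 0
  show ?case by (auto intro!: monoI simp: origin_0)
next
  case (Suc t)
  have "origin X (Suc t) v \<le> origin X (Suc t) (Suc v)" for v
  proof (cases "v \<le> t")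
    case True
    show ?thesis
      using origin_Suc_le[OF Suc.IH True] origin_le_Suc_Suc[OF Suc.IH True] by (rule order_trans)
  next
    case False
    then have "origin X (Suc t) (Suc v) = \<infinity>" by (simp add: origin_eq_infinity_iff)
    then show ?thesis by simp
  qed
  then show ?case by (simp add: mono_iff_le_Suc)
qed

definition walk_step :: "nat \<Rightarrow> nat \<Rightarrow> bool \<Rightarrow> nat" where
  "walk_step u p c = (if p = u then (if c then p else Suc p) else (if c then Suc p else p))"

definition walk_coin :: "nat \<Rightarrow> nat \<Rightarrow> nat \<times> nat \<times> bool" where
  "walk_coin u p = (u, Suc p, p = u)"

text \<open>At the rumor front (p = u) the walk reads the \<alpha>-coin of the new vertex u + 1, which
  stays on True (fresh index); behind the front it reads the \<beta>-coin of vertex p + 1, which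
  advances on True (copy of the parent).\<close>
fun frontier_walk :: "(nat \<times> nat \<times> bool \<Rightarrow> bool) \<Rightarrow> nat \<Rightarrow> nat \<Rightarrow> nat" where
  "frontier_walk X s 0 = s"
| "frontier_walk X s (Suc m) =
     walk_step (s + m) (frontier_walk X s m) (X (walk_coin (s + m) (frontier_walk X s m)))"

lemma walk_step_cases: "walk_step u p c \<in> {p, Suc p}"
  by (simp add: walk_step_def)

lemma frontier_walk_le: "frontier_walk X s m \<le> s + m"
  by (induction m) (auto simp: walk_step_def)

lemma origin_le_Suc_iff:
  assumes down: "\<And>i. origin X u i \<le> k \<longleftrightarrow> i \<le> p"
    and "p \<le> u" and k: "k < enat (counter X u)"
  shows "origin X (Suc u) i \<le> k \<longleftrightarrow> i \<le> walk_step u p (X (walk_coin u p))"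
proof -
  have below: "origin X (Suc u) i \<le> k" if "i \<le> p" for i
    using origin_Suc_le[OF origin_mono, of i u X] down[of i] that \<open>p \<le> u\<close> by auto
  have above: "\<not> origin X (Suc u) i \<le> k" if "Suc (Suc p) \<le> i" for i
  proof (cases "i \<le> Suc u")
    case True
    then have "origin X u (i - 1) \<le> origin X (Suc u) i"
      using origin_le_Suc_Suc[OF origin_mono, of "i - 1" u X] that by auto
    then show ?thesis using down[of "i - 1"] that by auto
  next
    case False
    then show ?thesis using k by (cases k) (simp_all add: origin_eq_infinity_iff[THEN iffD2])
  qed
  have next_vertex: "origin X (Suc u) (Suc p) \<le> k \<longleftrightarrow> Suc p \<le> walk_step u p (X (walk_coin u p))"
  proof (cases "p = u")
    case True
    have "origin X u u \<le> k" "origin X u (Suc u) = \<infinity>" "origin X u u \<noteq> \<infinity>"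
      using down[of u] True by (simp_all add: origin_eq_infinity_iff)
    then show ?thesis using True k by (auto simp: origin_Suc walk_step_def walk_coin_def)
  next
    case False
    then have "origin X u (Suc p) \<noteq> \<infinity>"
      using \<open>p \<le> u\<close> by (simp add: origin_eq_infinity_iff)
    moreover have "origin X u p \<le> k" "\<not> origin X u (Suc p) \<le> k"
      using down by auto
    ultimately show ?thesis using False by (auto simp: origin_Suc walk_step_def walk_coin_def)
  qed
  consider "i \<le> p" | "i = Suc p" | "Suc (Suc p) \<le> i" by linarith
  then show ?thesis
    using below above next_vertex walk_step_cases[of u p "X (walk_coin u p)"] by cases auto
qed

lemma origin_le_rumor_index_iff: "origin X (s + m) i \<le> rumor_index X s \<longleftrightarrow> i \<le> frontier_walk X s m"
proof (induction m arbitrary: i)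
  case 0
  have "origin X s s \<noteq> \<infinity>" by (simp add: origin_eq_infinity_iff)
  then show ?case
    using monoD[OF origin_mono, of i s X] origin_eq_infinity_iff[of X s i]
    by (auto simp: rumor_index_def)
next
  case (Suc m)
  have "rumor_index X s < enat (counter X s)"
    unfolding rumor_index_def by (simp add: origin_less_counter origin_eq_infinity_iff)
  also have "\<dots> \<le> enat (counter X (s + m))"
    by (simp add: counter_mono)
  finally show ?case
    using origin_le_Suc_iff[OF Suc.IH frontier_walk_le] by simp
qed

lemma frontier_eq_frontier_walk:
  assumes "s \<le> t"
  shows "frontier X (rumor_index X s) t = frontier_walk X s (t - s)"
proof -
  have "{i. origin X t i \<le> rumor_index X s} = {..frontier_walk X s (t - s)}"
    using origin_le_rumor_index_iff[of X s "t - s"] assms by auto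
  moreover have "Max {..frontier_walk X s (t - s)} = frontier_walk X s (t - s)"
    by (rule Max_eqI) auto
  ultimately show ?thesis by (simp add: frontier_def)
qed

abbreviation coin_law :: "real \<Rightarrow> real \<Rightarrow> nat \<times> nat \<times> bool \<Rightarrow> bool measure" where
  "coin_law \<alpha> \<beta> j \<equiv> measure_pmf (bernoulli_pmf (if snd (snd j) then \<alpha> else \<beta>))"

lemma frontier_walk_cong:
  "(\<And>j. fst j < s + m \<Longrightarrow> X j = Y j) \<Longrightarrow> frontier_walk X s m = frontier_walk Y s m"
  by (induction m) (auto simp: walk_coin_def)

lemma component_measurable:
  "j \<in> I \<Longrightarrow> (\<lambda>X. X j) \<in> measurable (\<Pi>\<^sub>M i\<in>I. coin_law \<alpha> \<beta> i) (count_space UNIV)"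
  using measurable_component_singleton[of j I "coin_law \<alpha> \<beta>"]
  by (subst measurable_cong_sets[OF refl, where N'="coin_law \<alpha> \<beta> j"]) auto

lemma frontier_walk_measurable:
  "{j. fst j < s + m} \<subseteq> I \<Longrightarrow>
     (\<lambda>X. frontier_walk X s m) \<in> measurable (\<Pi>\<^sub>M i\<in>I. coin_law \<alpha> \<beta> i) (count_space UNIV)"
proof (induction m)
  case 0
  show ?case by simp
next
  case (Suc m)
  have "{j. fst j < s + m} \<subseteq> I"
    using Suc.prems by auto
  then have "(\<lambda>X. frontier_walk X s m) \<in> measurable (\<Pi>\<^sub>M i\<in>I. coin_law \<alpha> \<beta> i) (count_space UNIV)"
    by (rule Suc.IH)
  moreover have "(\<lambda>X. walk_step (s + m) p (X (walk_coin (s + m) p)))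
      \<in> measurable (\<Pi>\<^sub>M i\<in>I. coin_law \<alpha> \<beta> i) (count_space UNIV)" for p
    using Suc.prems
    by (intro measurable_compose[OF component_measurable]) (auto simp: walk_coin_def)
  ultimately show ?case
    by (simp only: frontier_walk.simps) (rule measurable_compose_countable'; simp)
qed

lemma exp_minus_le_quadratic:
  fixes l :: real
  assumes "0 \<le> l"
  shows "exp (- l) \<le> 1 - l + l\<^sup>2"
proof -
  have "1 - l + l\<^sup>2 = (l - 1/2)\<^sup>2 + 3/4"
    by (simp add: power2_eq_square algebra_simps)
  then have pos: "0 \<le> 1 - l + l\<^sup>2"
    by (metis zero_le_power2 add_nonneg_nonneg zero_le_divide_iff zero_le_numeral)
  have "(1 - l + l\<^sup>2) * (1 + l + l\<^sup>2 / 2) = 1 + (l\<^sup>2 + l ^ 3 + l ^ 4) / 2"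
    by (simp add: field_simps power2_eq_square power3_eq_cube power4_eq_xxxx)
  then have "1 \<le> (1 - l + l\<^sup>2) * (1 + l + l\<^sup>2 / 2)"
    using assms by simp
  also have "\<dots> \<le> (1 - l + l\<^sup>2) * exp l"
    using exp_lower_Taylor_quadratic[OF assms] pos by (rule mult_left_mono)
  finally have "1 \<le> (1 - l + l\<^sup>2) * exp l" .
  then show ?thesis
    by (simp add: exp_minus field_simps)
qed

lemma tilt_factor_power_le:
  fixes \<beta> l :: real
  assumes "0 \<le> \<beta>" "\<beta> \<le> 1"
  shows "(1 - \<beta> + \<beta> * exp l) ^ n \<le> exp (real n * \<beta> * (exp l - 1))"
proof -
  have "1 - \<beta> + \<beta> * exp l \<le> exp (\<beta> * (exp l - 1))"
    using exp_ge_add_one_self[of "\<beta> * (exp l - 1)"] by (simp add: algebra_simps)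
  moreover have "0 \<le> 1 - \<beta> + \<beta> * exp l"
    using assms by (intro add_nonneg_nonneg mult_nonneg_nonneg) auto
  ultimately have "(1 - \<beta> + \<beta> * exp l) ^ n \<le> exp (\<beta> * (exp l - 1)) ^ n"
    by (rule power_mono)
  then show ?thesis
    by (simp add: mult.assoc flip: exp_of_nat_mult)
qed

text \<open>The largest tilt l for which a frontier standing at the rumor front is dominated
  with weight 2, i.e. \<alpha> + 2 (1 - \<alpha>) e^l \<le> 2.\<close>
definition max_tilt :: "real \<Rightarrow> real" where
  "max_tilt \<alpha> = ln ((2 - \<alpha>) / (2 - 2 * \<alpha>))"

lemma max_tilt_pos: "0 < \<alpha> \<Longrightarrow> \<alpha> < 1 \<Longrightarrow> 0 < max_tilt \<alpha>"
  by (simp add: max_tilt_def field_simps)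

lemma exp_le_of_le_max_tilt:
  assumes "\<alpha> < 1" "l \<le> max_tilt \<alpha>"
  shows "(2 - 2 * \<alpha>) * exp l \<le> 2 - \<alpha>"
proof -
  have "exp l \<le> (2 - \<alpha>) / (2 - 2 * \<alpha>)"
    using assms by (simp add: max_tilt_def ln_ge_iff[symmetric] divide_pos_pos)
  then show ?thesis
    using assms(1) by (simp add: field_simps)
qed

lemma chernoff_exponent_le:
  fixes w N \<beta> :: real
  assumes "0 < N" "0 < \<beta>" "n \<le> N"
  shows "n * \<beta> * (2 * w / sqrt (\<beta> * N))\<^sup>2 - 2 * w / sqrt (\<beta> * N) * (4 * w * sqrt (\<beta> * N))
           \<le> - 4 * w\<^sup>2"
proof -
  define r where "r = sqrt (\<beta> * N)"
  have r: "0 < r" "r\<^sup>2 = \<beta> * N"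
    using assms by (auto simp: r_def)
  have "n * \<beta> * (2 * w / r)\<^sup>2 = 4 * w\<^sup>2 * (n / N)"
    using r assms by (simp add: power_divide power_mult_distrib field_simps)
  also have "\<dots> \<le> 4 * w\<^sup>2"
    using assms by (intro mult_left_le) auto
  finally have "n * \<beta> * (2 * w / r)\<^sup>2 \<le> 4 * w\<^sup>2" .
  moreover have "2 * w / r * (4 * w * r) = 8 * w\<^sup>2"
    using r by (simp add: power2_eq_square)
  ultimately show ?thesis
    unfolding r_def by linarith
qed

lemma three_exp_minus_four_sq_le:
  fixes w :: real
  assumes "1 \<le> w"
  shows "3 * exp (- 4 * w\<^sup>2) \<le> exp (- w\<^sup>2)"
proof -
  have "3 \<le> exp (3 * w\<^sup>2)"
    using exp_ge_add_one_self[of "3 * w\<^sup>2"] assms one_le_power[of w 2] by linarith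
  then have "3 * exp (- 4 * w\<^sup>2) \<le> exp (3 * w\<^sup>2) * exp (- 4 * w\<^sup>2)"
    by (intro mult_right_mono) auto
  then show ?thesis
    by (simp flip: exp_add)
qed

lemma eventually_le_const_mult_sqrt:
  fixes f :: "nat \<Rightarrow> real"
  assumes "0 < c" "f \<in> O(\<lambda>m. real m powr (1/2 - c))" "0 < \<epsilon>"
  shows "\<exists>N. \<forall>m\<ge>N. f m \<le> \<epsilon> * sqrt (real m)"
proof -
  have "(\<lambda>m::nat. real m powr (1/2 - c)) \<in> o(\<lambda>m. real m powr (1/2))"
    using assms(1) by (subst powr_smallo_iff) (auto simp: filterlim_real_sequentially)
  then have "f \<in> o(\<lambda>m. real m powr (1/2))"
    by (rule landau_o.big_small_trans[OF assms(2)])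
  then have "eventually (\<lambda>m. norm (f m) \<le> \<epsilon> * norm (real m powr (1/2))) sequentially"
    using assms(3) by (rule landau_o.smallD)
  then obtain N where "\<And>m. N \<le> m \<Longrightarrow> \<bar>f m\<bar> \<le> \<epsilon> * sqrt (real m)"
    by (auto simp: eventually_sequentially powr_half_sqrt)
  then show ?thesis
    by (meson abs_ge_self order_trans)
qed

section \<open>The walk under independent coins\<close>

locale coin_model =
  fixes \<alpha> \<beta> :: real
  assumes \<alpha>_bounds: "0 \<le> \<alpha>" "\<alpha> \<le> 1" and \<beta>_bounds: "0 \<le> \<beta>" "\<beta> \<le> 1"

sublocale coin_model \<subseteq> product_prob_space "coin_law \<alpha> \<beta>" UNIV
  by (simp add: product_prob_space_def product_prob_space_axioms_def product_sigma_finite_def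
      prob_space_measure_pmf prob_space_imp_sigma_finite)

context coin_model
begin

abbreviation \<Omega> :: "(nat \<times> nat \<times> bool \<Rightarrow> bool) measure" where
  "\<Omega> \<equiv> \<Pi>\<^sub>M j\<in>UNIV. coin_law \<alpha> \<beta> j"

lemma coins_indep: "indep_vars (coin_law \<alpha> \<beta>) (\<lambda>j X. X j) UNIV"
proof -
  have "distr \<Omega> \<Omega> (\<lambda>X. \<lambda>j\<in>UNIV. X j) = \<Omega>"
    by (simp add: restrict_UNIV)
  also have "\<dots> = (\<Pi>\<^sub>M j\<in>UNIV. distr \<Omega> (coin_law \<alpha> \<beta> j) (\<lambda>X. X j))"
    by (rule PiM_cong) (simp_all add: PiM_component)
  finally show ?thesis
    by (intro indep_vars_iff_distr_eq_PiM[THEN iffD2] measurable_component_singleton) auto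
qed

lemma walk_events: "{X \<in> space \<Omega>. P (frontier_walk X s m)} \<in> events"
proof -
  have "{X \<in> space \<Omega>. P (frontier_walk X s m)} = (\<lambda>X. frontier_walk X s m) -` {p. P p} \<inter> space \<Omega>"
    by auto
  also have "\<dots> \<in> events"
    by (rule measurable_sets[OF frontier_walk_measurable]) auto
  finally show ?thesis .
qed

lemma walk_eq_events: "{X \<in> space \<Omega>. frontier_walk X s m = p} \<in> events"
  using walk_events[of "\<lambda>q. q = p"] by simp

lemma walk_coin_events: "{X \<in> space \<Omega>. frontier_walk X s m = p \<and> X j = c} \<in> events"
proof -
  have "{X \<in> space \<Omega>. frontier_walk X s m = p \<and> X j = c}
      = {X \<in> space \<Omega>. frontier_walk X s m = p} \<inter> ((\<lambda>X. X j) -` {c} \<inter> space \<Omega>)"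
    by auto
  also have "\<dots> \<in> events"
    by (intro sets.Int walk_eq_events measurable_sets[OF component_measurable]) auto
  finally show ?thesis .
qed

lemma two_walks_events: "{X \<in> space \<Omega>. Q (frontier_walk X s m) (frontier_walk X s' m')} \<in> events"
proof -
  have "{X \<in> space \<Omega>. Q (frontier_walk X s m) (frontier_walk X s' m')}
     = (\<Union>p\<in>{..s + m}. {X \<in> space \<Omega>. frontier_walk X s m = p}
                      \<inter> {X \<in> space \<Omega>. Q p (frontier_walk X s' m')})"
    using frontier_walk_le by blast
  also have "\<dots> \<in> events"
    by (intro sets.finite_UN sets.Int walk_eq_events walk_events) auto
  finally show ?thesis .
qed

definition coin_prob :: "nat \<times> nat \<times> bool \<Rightarrow> bool \<Rightarrow> real" where
  "coin_prob j c = prob {X \<in> space \<Omega>. X j = c}"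

lemma coin_prob_eq:
  "coin_prob j c = (let \<theta> = if snd (snd j) then \<alpha> else \<beta> in if c then \<theta> else 1 - \<theta>)"
proof -
  have "coin_prob j c = measure (distr \<Omega> (coin_law \<alpha> \<beta> j) (\<lambda>X. X j)) {c}"
    unfolding coin_prob_def
    by (subst measure_distr) (auto intro!: arg_cong[where f = prob] simp: measurable_component_singleton)
  also have "\<dots> = pmf (bernoulli_pmf (if snd (snd j) then \<alpha> else \<beta>)) c"
    by (simp add: PiM_component measure_pmf_single)
  finally show ?thesis
    using \<alpha>_bounds \<beta>_bounds by (cases c) (auto simp: Let_def)
qed

lemma walk_indep_later_coin:
  assumes "s + m \<le> fst j"
  shows "prob {X \<in> space \<Omega>. frontier_walk X s m = p \<and> X j = c}
       = prob {X \<in> space \<Omega>. frontier_walk X s m = p} * coin_prob j c"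
proof -
  define A where "A = {i :: nat \<times> nat \<times> bool. fst i < s + m}"
  define Wa where "Wa = (\<lambda>X. frontier_walk X s m) -` {p} \<inter> space (\<Pi>\<^sub>M i\<in>A. coin_law \<alpha> \<beta> i)"
  define Wb where "Wb = (\<lambda>X. X j) -` {c} \<inter> space (\<Pi>\<^sub>M i\<in>{j}. coin_law \<alpha> \<beta> i)"
  have "indep_var (\<Pi>\<^sub>M i\<in>A. coin_law \<alpha> \<beta> i) (\<lambda>X. restrict X A)
                  (\<Pi>\<^sub>M i\<in>{j}. coin_law \<alpha> \<beta> i) (\<lambda>X. restrict X {j})"
    using indep_var_restrict[OF coins_indep, of A "{j}"] assms by (auto simp: A_def)
  moreover have "Wa \<in> sets (\<Pi>\<^sub>M i\<in>A. coin_law \<alpha> \<beta> i)"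
    unfolding Wa_def by (rule measurable_sets[OF frontier_walk_measurable]) (auto simp: A_def)
  moreover have "Wb \<in> sets (\<Pi>\<^sub>M i\<in>{j}. coin_law \<alpha> \<beta> i)"
    unfolding Wb_def by (rule measurable_sets[OF component_measurable]) auto
  ultimately have "prob ((\<lambda>X. (restrict X A, restrict X {j})) -` (Wa \<times> Wb) \<inter> space \<Omega>)
      = prob ((\<lambda>X. restrict X A) -` Wa \<inter> space \<Omega>) * prob ((\<lambda>X. restrict X {j}) -` Wb \<inter> space \<Omega>)"
    by (rule indep_varD)
  moreover have "frontier_walk (restrict X A) s m = frontier_walk X s m" for X
    by (rule frontier_walk_cong) (auto simp: A_def)
  ultimately show ?thesis
    unfolding Wa_def Wb_def coin_prob_def by (simp add: space_PiM vimage_def)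
qed

definition walk_dist :: "nat \<Rightarrow> nat \<Rightarrow> nat \<Rightarrow> real" where
  "walk_dist s m p = prob {X \<in> space \<Omega>. frontier_walk X s m = p}"

lemma walk_dist_0: "walk_dist s 0 p = (if p = s then 1 else 0)"
  by (simp add: walk_dist_def P.prob_space)

lemma prob_walk_in: "prob {X \<in> space \<Omega>. frontier_walk X s m \<in> B} = (\<Sum>p\<in>{..s + m} \<inter> B. walk_dist s m p)"
proof -
  have "{X \<in> space \<Omega>. frontier_walk X s m \<in> B}
      = (\<Union>p\<in>{..s + m} \<inter> B. {X \<in> space \<Omega>. frontier_walk X s m = p})"
    using frontier_walk_le by auto
  also have "prob \<dots> = (\<Sum>p\<in>{..s + m} \<inter> B. walk_dist s m p)"
    unfolding walk_dist_def
    by (rule finite_measure_finite_Union) (auto simp: disjoint_family_on_def walk_eq_events)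
  finally show ?thesis .
qed

lemma walk_dist_Suc:
  "walk_dist s (Suc m) p' = (\<Sum>p\<le>s + m. \<Sum>c\<in>UNIV.
     if walk_step (s + m) p c = p' then walk_dist s m p * coin_prob (walk_coin (s + m) p) c else 0)"
proof -
  define u where "u = s + m"
  define S where "S = {pc \<in> {..u} \<times> (UNIV :: bool set). walk_step u (fst pc) (snd pc) = p'}"
  define E where "E = (\<lambda>pc. {X \<in> space \<Omega>. frontier_walk X s m = fst pc \<and> X (walk_coin u (fst pc)) = snd pc})"
  have "{X \<in> space \<Omega>. frontier_walk X s (Suc m) = p'} = (\<Union>pc\<in>S. E pc)"
    using frontier_walk_le[of _ s m] by (auto simp: S_def E_def u_def)
  then have "walk_dist s (Suc m) p' = prob (\<Union>pc\<in>S. E pc)"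
    by (simp add: walk_dist_def)
  also have "\<dots> = (\<Sum>pc\<in>S. prob (E pc))"
    by (rule finite_measure_finite_Union) (auto simp: S_def E_def disjoint_family_on_def walk_coin_events)
  also have "\<dots> = (\<Sum>pc\<in>S. walk_dist s m (fst pc) * coin_prob (walk_coin u (fst pc)) (snd pc))"
    unfolding E_def walk_dist_def by (intro sum.cong refl walk_indep_later_coin) (simp add: walk_coin_def u_def)
  also have "\<dots> = (\<Sum>pc\<in>{..u} \<times> UNIV. if walk_step u (fst pc) (snd pc) = p'
      then walk_dist s m (fst pc) * coin_prob (walk_coin u (fst pc)) (snd pc) else 0)"
    unfolding S_def by (rule sum.inter_filter) auto
  finally show ?thesis
    unfolding u_def by (simp add: sum.cartesian_product case_prod_beta)
qed

lemma walk_moment_Suc: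
  "(\<Sum>p'\<le>s + Suc m. walk_dist s (Suc m) p' * g p')
   = (\<Sum>p\<le>s + m. walk_dist s m p *
        (\<Sum>c\<in>UNIV. coin_prob (walk_coin (s + m) p) c * g (walk_step (s + m) p c)))"
proof -
  define u where "u = s + m"
  have "(\<Sum>p'\<le>s + Suc m. walk_dist s (Suc m) p' * g p')
     = (\<Sum>p'\<le>Suc u. \<Sum>p\<le>u. \<Sum>c\<in>UNIV.
          if walk_step u p c = p' then walk_dist s m p * coin_prob (walk_coin u p) c * g p' else 0)"
    unfolding walk_dist_Suc u_def sum_distrib_right by (intro sum.cong refl) auto
  also have "\<dots> = (\<Sum>p\<le>u. \<Sum>c\<in>UNIV. \<Sum>p'\<le>Suc u.
          if walk_step u p c = p' then walk_dist s m p * coin_prob (walk_coin u p) c * g p' else 0)"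
    by (subst sum.swap) (subst sum.swap, rule refl)
  also have "\<dots> = (\<Sum>p\<le>u. \<Sum>c\<in>UNIV. walk_dist s m p * coin_prob (walk_coin u p) c * g (walk_step u p c))"
    by (intro sum.cong refl) (auto simp: walk_step_def)
  finally show ?thesis
    unfolding u_def by (simp add: sum_distrib_left mult.assoc)
qed

text \<open>The weight H makes the rumor front, where the walk advances with probability
  1 - \<alpha> instead of \<beta>, no worse than a \<beta>-coin for the tilted potential.\<close>
lemma walk_mgf_le:
  assumes "0 < H" and front: "\<alpha> + (1 - \<alpha>) * exp l * H \<le> (1 - \<beta> + \<beta> * exp l) * H"
  shows "(\<Sum>p\<le>s + n. walk_dist s n p * (exp (l * (real p - real s)) * (if p = s + n then H else 1)))
         \<le> (1 - \<beta> + \<beta> * exp l) ^ n * H"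
proof (induction n)
  case 0
  show ?case by (simp add: walk_dist_0 if_distrib sum.If_cases)
next
  case (Suc n)
  define \<Phi> where "\<Phi> = 1 - \<beta> + \<beta> * exp l"
  define V where "V = (\<lambda>m p. exp (l * (real p - real s)) * (if p = s + m then H else 1))"
  have \<Phi>_nonneg: "0 \<le> \<Phi>"
    unfolding \<Phi>_def using \<beta>_bounds by (intro add_nonneg_nonneg mult_nonneg_nonneg) auto
  have exp_Suc: "exp (l * (1 + real p - real s)) = exp (l * (real p - real s)) * exp l" for p
    by (simp add: algebra_simps flip: exp_add)
  have step: "(\<Sum>c\<in>UNIV. coin_prob (walk_coin (s + n) p) c * V (Suc n) (walk_step (s + n) p c))
      \<le> \<Phi> * V n p" if "p \<le> s + n" for p
  proof (cases "p = s + n")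
    case True
    then have "(\<Sum>c\<in>UNIV. coin_prob (walk_coin (s + n) p) c * V (Suc n) (walk_step (s + n) p c))
        = exp (l * (real p - real s)) * (\<alpha> + (1 - \<alpha>) * exp l * H)"
      by (simp add: UNIV_bool coin_prob_eq walk_coin_def walk_step_def V_def exp_Suc algebra_simps exp_add)
    also have "\<dots> \<le> exp (l * (real p - real s)) * (\<Phi> * H)"
      using front unfolding \<Phi>_def by (intro mult_left_mono) auto
    finally show ?thesis using True by (simp add: V_def mult.left_commute)
  next
    case False
    then have "(\<Sum>c\<in>UNIV. coin_prob (walk_coin (s + n) p) c * V (Suc n) (walk_step (s + n) p c))
        = \<beta> * (exp (l * (real p - real s)) * exp l) + (1 - \<beta>) * exp (l * (real p - real s))"
      using that by (simp add: UNIV_bool coin_prob_eq walk_coin_def walk_step_def V_def exp_Suc)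
    also have "\<dots> = \<Phi> * V n p"
      using False by (simp add: V_def \<Phi>_def algebra_simps)
    finally show ?thesis by simp
  qed
  have "(\<Sum>p\<le>s + Suc n. walk_dist s (Suc n) p * V (Suc n) p)
      = (\<Sum>p\<le>s + n. walk_dist s n p *
          (\<Sum>c\<in>UNIV. coin_prob (walk_coin (s + n) p) c * V (Suc n) (walk_step (s + n) p c)))"
    by (rule walk_moment_Suc)
  also have "\<dots> \<le> (\<Sum>p\<le>s + n. walk_dist s n p * (\<Phi> * V n p))"
    by (intro sum_mono mult_left_mono step) (auto simp: walk_dist_def)
  also have "\<dots> = \<Phi> * (\<Sum>p\<le>s + n. walk_dist s n p * V n p)"
    by (simp add: sum_distrib_left algebra_simps)
  also have "\<dots> \<le> \<Phi> * (\<Phi> ^ n * H)"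
    using Suc.IH \<Phi>_nonneg unfolding V_def \<Phi>_def by (intro mult_left_mono) auto
  finally show ?case unfolding V_def \<Phi>_def by simp
qed

lemma walk_tail_le:
  assumes "1 \<le> H" and front: "\<alpha> + (1 - \<alpha>) * exp l * H \<le> (1 - \<beta> + \<beta> * exp l) * H"
    and B: "\<And>p. p \<in> B \<Longrightarrow> a \<le> l * (real p - real s)"
  shows "prob {X \<in> space \<Omega>. frontier_walk X s n \<in> B} \<le> (1 - \<beta> + \<beta> * exp l) ^ n * H * exp (- a)"
proof -
  define V where "V = (\<lambda>p. exp (l * (real p - real s)) * (if p = s + n then H else 1))"
  have V_ge: "exp a \<le> V p" if "p \<in> B" for p
  proof -
    have "exp a \<le> exp (l * (real p - real s))" using B[OF that] by simp
    also have "\<dots> \<le> V p" using \<open>1 \<le> H\<close> by (simp add: V_def)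
    finally show ?thesis .
  qed
  have V_nonneg: "0 \<le> V p" for p
    using \<open>1 \<le> H\<close> by (simp add: V_def)
  have "prob {X \<in> space \<Omega>. frontier_walk X s n \<in> B} = (\<Sum>p\<in>{..s + n} \<inter> B. walk_dist s n p)"
    by (rule prob_walk_in)
  also have "\<dots> \<le> (\<Sum>p\<in>{..s + n} \<inter> B. walk_dist s n p * (V p * exp (- a)))"
  proof (rule sum_mono)
    fix p assume "p \<in> {..s + n} \<inter> B"
    then have "1 \<le> V p * exp (- a)" using V_ge[of p] by (simp add: exp_minus field_simps)
    then show "walk_dist s n p \<le> walk_dist s n p * (V p * exp (- a))"
      using mult_left_mono[of 1 "V p * exp (- a)" "walk_dist s n p"] by (simp add: walk_dist_def)
  qed
  also have "\<dots> \<le> (\<Sum>p\<le>s + n. walk_dist s n p * (V p * exp (- a)))"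
    by (rule sum_mono2) (auto simp: walk_dist_def V_nonneg)
  also have "\<dots> = (\<Sum>p\<le>s + n. walk_dist s n p * V p) * exp (- a)"
    by (simp add: sum_distrib_right mult.assoc)
  also have "\<dots> \<le> (1 - \<beta> + \<beta> * exp l) ^ n * H * exp (- a)"
    using walk_mgf_le[of H l s n] assms(1) front unfolding V_def by (intro mult_right_mono) auto
  finally show ?thesis .
qed

lemma walk_upper_tail:
  assumes "\<alpha> < 1" "0 < l" "l \<le> 1" "l \<le> max_tilt \<alpha>"
  shows "prob {X \<in> space \<Omega>. frontier_walk X s n \<in> {p. \<beta> * n + x \<le> real p - real s}}
           \<le> 3 * exp (n * \<beta> * l\<^sup>2 - l * x)"
proof -
  have "\<alpha> + (1 - \<alpha>) * exp l * 2 \<le> 2"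
    using exp_le_of_le_max_tilt[OF assms(1,4)] by (simp add: algebra_simps)
  also have "\<dots> \<le> (1 - \<beta> + \<beta> * exp l) * 2"
    using \<beta>_bounds assms(2) mult_left_mono[of 1 "exp l" \<beta>] by simp
  finally have "prob {X \<in> space \<Omega>. frontier_walk X s n \<in> {p. \<beta> * n + x \<le> real p - real s}}
      \<le> (1 - \<beta> + \<beta> * exp l) ^ n * 2 * exp (- (l * (\<beta> * n + x)))"
    using assms(2) by (intro walk_tail_le) (auto intro: mult_left_mono)
  also have "\<dots> \<le> exp (n * \<beta> * (exp l - 1)) * 2 * exp (- (l * (\<beta> * n + x)))"
    using \<beta>_bounds by (intro mult_right_mono tilt_factor_power_le) auto
  also have "\<dots> \<le> exp (n * \<beta> * (l + l\<^sup>2)) * 2 * exp (- (l * (\<beta> * n + x)))"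
    using exp_bound[of l] assms(2,3) \<beta>_bounds by (intro mult_right_mono) (auto intro: mult_left_mono)
  also have "\<dots> = 2 * exp (n * \<beta> * l\<^sup>2 - l * x)"
    by (simp add: algebra_simps flip: exp_add)
  finally show ?thesis
    using exp_gt_zero[of "n * \<beta> * l\<^sup>2 - l * x"] by linarith
qed

lemma walk_lower_tail:
  assumes "0 < l" "l \<le> 1"
  shows "prob {X \<in> space \<Omega>. frontier_walk X s n \<in> {p. real p - real s \<le> \<beta> * n - x}}
           \<le> 3 * exp (n * \<beta> * l\<^sup>2 - l * x)"
proof -
  have "\<alpha> + (1 - \<alpha>) * exp (- l) * exp l = 1"
    by (simp add: mult.assoc flip: exp_add)
  also have "\<dots> \<le> (1 - \<beta> + \<beta> * exp (- l)) * exp l"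
    using \<beta>_bounds assms(1) mult_nonneg_nonneg[of "1 - \<beta>" "exp l - 1"]
    by (simp add: algebra_simps flip: exp_add)
  finally have "prob {X \<in> space \<Omega>. frontier_walk X s n \<in> {p. real p - real s \<le> \<beta> * n - x}}
      \<le> (1 - \<beta> + \<beta> * exp (- l)) ^ n * exp l * exp (- (- l * (\<beta> * n - x)))"
    using assms(1) by (intro walk_tail_le) (auto intro: mult_left_mono)
  also have "\<dots> \<le> exp (n * \<beta> * (exp (- l) - 1)) * exp l * exp (- (- l * (\<beta> * n - x)))"
    using \<beta>_bounds by (intro mult_right_mono tilt_factor_power_le) auto
  also have "\<dots> \<le> exp (n * \<beta> * (- l + l\<^sup>2)) * exp l * exp (- (- l * (\<beta> * n - x)))"
    using exp_minus_le_quadratic[of l] assms(1) \<beta>_bounds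
    by (intro mult_right_mono) (auto intro: mult_left_mono)
  also have "\<dots> = exp l * exp (n * \<beta> * l\<^sup>2 - l * x)"
    by (simp add: algebra_simps flip: exp_add)
  also have "\<dots> \<le> 3 * exp (n * \<beta> * l\<^sup>2 - l * x)"
    using exp_le assms(2) by (intro mult_right_mono) (auto intro: order_trans[of _ "exp 1"])
  finally show ?thesis .
qed

lemma walk_deviation_le:
  assumes "\<alpha> < 1" "0 < l" "l \<le> 1" "l \<le> max_tilt \<alpha>"
  shows "prob {X \<in> space \<Omega>. x \<le> \<bar>real (frontier_walk X s n) - (real s + \<beta> * n)\<bar>}
           \<le> 6 * exp (n * \<beta> * l\<^sup>2 - l * x)"
proof -
  have "prob {X \<in> space \<Omega>. x \<le> \<bar>real (frontier_walk X s n) - (real s + \<beta> * n)\<bar>}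
      \<le> prob ({X \<in> space \<Omega>. frontier_walk X s n \<in> {p. \<beta> * n + x \<le> real p - real s}}
              \<union> {X \<in> space \<Omega>. frontier_walk X s n \<in> {p. real p - real s \<le> \<beta> * n - x}})"
    by (intro finite_measure_mono sets.Un walk_events) auto
  also have "\<dots> \<le> 3 * exp (n * \<beta> * l\<^sup>2 - l * x) + 3 * exp (n * \<beta> * l\<^sup>2 - l * x)"
    using walk_upper_tail[OF assms] walk_lower_tail[OF assms(2,3)]
    by (intro order_trans[OF measure_Un_le] add_mono walk_events) auto
  finally show ?thesis by simp
qed

lemma walk_deviation_le_exp:
  assumes "\<alpha> < 1" "0 < \<beta>" "0 < N" "n \<le> N" "0 < w"
    and tilt: "2 * w / sqrt (\<beta> * N) \<le> min 1 (max_tilt \<alpha>)"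
  shows "prob {X \<in> space \<Omega>. 4 * w * sqrt (\<beta> * N) \<le> \<bar>real (frontier_walk X r n) - (real r + \<beta> * n)\<bar>}
           \<le> 6 * exp (- 4 * w\<^sup>2)"
proof -
  define l where "l = 2 * w / sqrt (\<beta> * N)"
  have "0 < l" "l \<le> 1" "l \<le> max_tilt \<alpha>"
    using tilt assms(2,3,5) by (auto simp: l_def)
  then have "prob {X \<in> space \<Omega>. 4 * w * sqrt (\<beta> * N) \<le> \<bar>real (frontier_walk X r n) - (real r + \<beta> * n)\<bar>}
      \<le> 6 * exp (n * \<beta> * l\<^sup>2 - l * (4 * w * sqrt (\<beta> * N)))"
    by (rule walk_deviation_le[OF assms(1)])
  also have "\<dots> \<le> 6 * exp (- 4 * w\<^sup>2)"
    using chernoff_exponent_le[of N \<beta> n w] assms(2-4) by (simp add: l_def)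
  finally show ?thesis .
qed

lemma frontier_walks_concentrate:
  assumes "\<alpha> < 1" "0 < \<beta>" "s < s'" "s' \<le> t" "1 \<le> w"
    and tilt: "2 * w / sqrt (\<beta> * real (t - s)) \<le> min 1 (max_tilt \<alpha>)"
    and gap: "10 * w * sqrt (real (t - s)) < (1 - \<beta>) * real (s' - s)"
  shows "1 - 4 * exp (- w\<^sup>2) \<le> prob {X \<in> space \<Omega>.
     \<bar>real (frontier_walk X s (t - s)) - (real s + \<beta> * real (t - s))\<bar>
        \<le> 4 * w * sqrt (\<beta> * real (t - s)) \<and>
     \<bar>real (frontier_walk X s' (t - s')) - (real s' + \<beta> * real (t - s'))\<bar>
        \<le> 4 * w * sqrt (\<beta> * real (t - s)) \<and>
     real (frontier_walk X s' (t - s')) - real (frontier_walk X s (t - s)) > w * sqrt (real (t - s)) \<and>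
     w * sqrt (real (t - s)) > 0}"
    (is "_ \<le> prob ?G")
proof -
  define N where "N = t - s"
  define x where "x = 4 * w * sqrt (\<beta> * N)"
  define D where "D = (\<lambda>r n. {X \<in> space \<Omega>. x \<le> \<bar>real (frontier_walk X r n) - (real r + \<beta> * n)\<bar>})"
  have N_pos: "0 < real N"
    using assms(3,4) by (simp add: N_def)
  have D_le: "prob (D r n) \<le> 6 * exp (- 4 * w\<^sup>2)" if "n \<le> N" for r n
    unfolding D_def x_def using assms(1,2,5) N_pos that tilt
    by (intro walk_deviation_le_exp) (auto simp: N_def)
  have D_events: "D r n \<in> events" for r n
    unfolding D_def by (rule walk_events)
  have "t - s' \<le> N"
    using assms(3) by (simp add: N_def)
  then have "prob (D s N \<union> D s' (t - s')) \<le> 4 * exp (- w\<^sup>2)"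
    using measure_Un_le[OF D_events D_events, of s N s' "t - s'"] D_le[OF order_refl, of s]
      D_le[of "t - s'" s'] three_exp_minus_four_sq_le[OF assms(5)] by linarith
  moreover have "space \<Omega> - (D s N \<union> D s' (t - s')) \<subseteq> ?G"
  proof
    fix X assume X: "X \<in> space \<Omega> - (D s N \<union> D s' (t - s'))"
    define a where "a = real (frontier_walk X s N)"
    define b where "b = real (frontier_walk X s' (t - s'))"
    have a: "\<bar>a - (real s + \<beta> * N)\<bar> < x" and b: "\<bar>b - (real s' + \<beta> * (t - s'))\<bar> < x"
      using X by (auto simp: D_def a_def b_def)
    have "x \<le> 4 * w * sqrt N"
      unfolding x_def using assms(2,5) \<beta>_bounds
      by (auto intro!: mult_left_mono real_sqrt_le_mono simp: mult_left_le_one_le)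
    moreover have "real s' + \<beta> * (t - s') - (real s + \<beta> * N) = (1 - \<beta>) * (s' - s)"
      using assms(3,4) by (simp add: N_def of_nat_diff algebra_simps)
    moreover have "0 < w * sqrt N"
      using assms(5) N_pos by simp
    ultimately have "b - a > w * sqrt N"
      using a b gap unfolding N_def by linarith
    then show "X \<in> ?G"
      using a b X assms(5) N_pos by (auto simp: a_def b_def x_def N_def)
  qed
  then have "prob (space \<Omega> - (D s N \<union> D s' (t - s'))) \<le> prob ?G"
    by (intro finite_measure_mono two_walks_events)
  ultimately show ?thesis
    using prob_compl[OF sets.Un[OF D_events D_events], of s N s' "t - s'"] by linarith
qed

lemma frontiers_concentrate:
  assumes "\<alpha> < 1" "0 < \<beta>" "\<beta> < 1" "s < s'" "s' \<le> t"
    and small: "real w \<le> min 1 (max_tilt \<alpha>) * sqrt \<beta> / 2 * sqrt (real (t - s))"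
    and gap: "10 / (1 - \<beta>) * real w * sqrt (real (t - s)) < real (s' - s)"
  shows "measure (coin_space \<alpha> \<beta>)
       {X \<in> space (coin_space \<alpha> \<beta>).
          \<bar>real (frontier X (rumor_index X s) t) - (real s + \<beta> * real (t - s))\<bar>
             \<le> 4 * real w * sqrt (\<beta> * real (t - s)) \<and>
          \<bar>real (frontier X (rumor_index X s') t) - (real s' + \<beta> * real (t - s'))\<bar>
             \<le> 4 * real w * sqrt (\<beta> * real (t - s)) \<and>
          real (frontier X (rumor_index X s') t) - real (frontier X (rumor_index X s) t)
             > real w * sqrt (real (t - s)) \<and>
          real w * sqrt (real (t - s)) > 0}
     \<ge> 1 - 4 * exp (- (real w)\<^sup>2)"
proof (cases "w = 0")
  case True
  then show ?thesis by simp
next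
  case False
  have N_pos: "0 < real (t - s)"
    using assms(4,5) by simp
  have "2 * real w \<le> min 1 (max_tilt \<alpha>) * sqrt (\<beta> * real (t - s))"
    using small by (simp add: real_sqrt_mult mult_ac)
  then have "2 * real w / sqrt (\<beta> * real (t - s)) \<le> min 1 (max_tilt \<alpha>)"
    using N_pos assms(2) by (simp only: pos_divide_le_eq real_sqrt_gt_zero mult_pos_pos)
  moreover have "10 * real w * sqrt (real (t - s)) < (1 - \<beta>) * real (s' - s)"
    using gap assms(3) by (simp add: field_simps)
  ultimately have "1 - 4 * exp (- (real w)\<^sup>2) \<le> prob {X \<in> space \<Omega>.
     \<bar>real (frontier_walk X s (t - s)) - (real s + \<beta> * real (t - s))\<bar>
        \<le> 4 * real w * sqrt (\<beta> * real (t - s)) \<and>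
     \<bar>real (frontier_walk X s' (t - s')) - (real s' + \<beta> * real (t - s'))\<bar>
        \<le> 4 * real w * sqrt (\<beta> * real (t - s)) \<and>
     real (frontier_walk X s' (t - s')) - real (frontier_walk X s (t - s)) > real w * sqrt (real (t - s)) \<and>
     real w * sqrt (real (t - s)) > 0}"
    using False assms(1-5) by (intro frontier_walks_concentrate) auto
  then show ?thesis
    using assms(4,5) by (simp add: coin_space_def frontier_eq_frontier_walk)
qed

lemma frontiers_concentrate_eventually:
  fixes \<omega> :: "nat \<Rightarrow> nat"
  assumes "0 < \<alpha>" "\<alpha> < 1" "0 < \<beta>" "\<beta> < 1"
    and "\<exists>c>0. (\<lambda>m. real (\<omega> m)) \<in> O(\<lambda>m. real m powr (1/2 - c))"
  shows "\<exists>C>0. \<forall>s s' t :: nat.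
     s < s' \<and> real s' \<le> real t - C \<and>
     real (s' - s) > 10 / (1 - \<beta>) * real (\<omega> (t - s)) * sqrt (real (t - s)) \<longrightarrow>
     measure (coin_space \<alpha> \<beta>)
       {X \<in> space (coin_space \<alpha> \<beta>).
          \<bar>real (frontier X (rumor_index X s) t) - (real s + \<beta> * real (t - s))\<bar>
             \<le> 4 * real (\<omega> (t - s)) * sqrt (\<beta> * real (t - s)) \<and>
          \<bar>real (frontier X (rumor_index X s') t) - (real s' + \<beta> * real (t - s'))\<bar>
             \<le> 4 * real (\<omega> (t - s)) * sqrt (\<beta> * real (t - s)) \<and>
          real (frontier X (rumor_index X s') t) - real (frontier X (rumor_index X s) t)
             > real (\<omega> (t - s)) * sqrt (real (t - s)) \<and>
          real (\<omega> (t - s)) * sqrt (real (t - s)) > 0}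
     \<ge> 1 - 4 * exp (- (real (\<omega> (t - s)))\<^sup>2)"
proof -
  obtain c where c: "0 < c" "(\<lambda>m. real (\<omega> m)) \<in> O(\<lambda>m. real m powr (1/2 - c))"
    using assms(5) by blast
  have "0 < min 1 (max_tilt \<alpha>) * sqrt \<beta> / 2"
    using assms(1-3) max_tilt_pos by simp
  then obtain N where N: "\<And>m. N \<le> m \<Longrightarrow> real (\<omega> m) \<le> min 1 (max_tilt \<alpha>) * sqrt \<beta> / 2 * sqrt (real m)"
    using eventually_le_const_mult_sqrt[OF c] by blast
  show ?thesis
  proof (rule exI[of _ "real N + 1"], intro conjI allI impI frontiers_concentrate)
    fix s s' t :: nat
    assume h: "s < s' \<and> real s' \<le> real t - (real N + 1) \<and>
      10 / (1 - \<beta>) * real (\<omega> (t - s)) * sqrt (real (t - s)) < real (s' - s)"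
    then show "s < s'" "s' \<le> t"
        "10 / (1 - \<beta>) * real (\<omega> (t - s)) * sqrt (real (t - s)) < real (s' - s)"
      by auto
    from h have "N \<le> t - s"
      by linarith
    then show "real (\<omega> (t - s)) \<le> min 1 (max_tilt \<alpha>) * sqrt \<beta> / 2 * sqrt (real (t - s))"
      by (rule N)
  qed (use assms in auto)
qed

end

theorem mainTheorem6:
  fixes \<beta> :: real and \<omega> :: "nat \<Rightarrow> nat"
  assumes "0 < \<beta>" "\<beta> < 1"
    and "mono \<omega>"
    and "\<exists>c>0. (\<lambda>m. real (\<omega> m)) \<in> O(\<lambda>m. real m powr (1/2 - c))"
  shows "\<exists>C'>0. \<forall>\<alpha>::real. 0 < \<alpha> \<and> \<alpha> < 1 \<longrightarrow> (\<exists>C>0. \<forall>s s' t :: nat.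
     s < s' \<and> real s' \<le> real t - C \<and>
     real (s' - s) > C' * real (\<omega> (t - s)) * sqrt (real (t - s)) \<longrightarrow>
     measure (coin_space \<alpha> \<beta>)
       {X \<in> space (coin_space \<alpha> \<beta>).
          \<bar>real (frontier X (rumor_index X s) t) - (real s + \<beta> * real (t - s))\<bar>
             \<le> 4 * real (\<omega> (t - s)) * sqrt (\<beta> * real (t - s)) \<and>
          \<bar>real (frontier X (rumor_index X s') t) - (real s' + \<beta> * real (t - s'))\<bar>
             \<le> 4 * real (\<omega> (t - s)) * sqrt (\<beta> * real (t - s)) \<and>
          real (frontier X (rumor_index X s') t) - real (frontier X (rumor_index X s) t)
             > real (\<omega> (t - s)) * sqrt (real (t - s)) \<and>
          real (\<omega> (t - s)) * sqrt (real (t - s)) > 0}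
     \<ge> 1 - 4 * exp (- (real (\<omega> (t - s)))\<^sup>2))"
proof (rule exI[of _ "10 / (1 - \<beta>)"], intro conjI allI impI)
  show "0 < 10 / (1 - \<beta>)"
    using assms(2) by simp
qed (rule coin_model.frontiers_concentrate_eventually, use assms in \<open>auto simp: coin_model_def\<close>)

end
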